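(* Let $f\colon D^*\to H^3$ be a regular weakly complete end of a flat front, with hyperbolic Gauss maps $G$ and $G_*$. Then \[\lim_{z\to0}\pi\circ f(z)=(G(0),0)=(G_*(0),0)\] holds if $G(0)\neq\infty$, where $\pi\colon H^3\to\mathbb{R}^3_+$ is the projection to the upper half-space model.
   Context: $H^3=\{uu^*:u\in SL(2,\mathbb{C})\}\subset\mathrm{Herm}(2)$; upper half-space model $\mathbb{R}^3_+=\{(\zeta,h)\in\mathbb{C}\times\mathbb{R}:h>0\}$ with metric $(|d\zeta|^2+dh^2)/h^2$; $\pi(uu^* )=(u_{11}\overline{u_{21}}+u_{12}\overline{u_{22}},1)/(|u_{21}|^2+|u_{22}|^2)$. A flat front on $D^*=\{0<|z|<1\}$ is $f=\mathcal{E}\mathcal{E}^*$ with $\mathcal{E}=(E_{ij})$ a holomorphic immersion from the universal cover of $D^*$ to $SL(2,\mathbb{C})$ with $\mathcal{E}^{-1}d\mathcal{E}=\begin{pmatrix}0&\theta\\ \omega&0\end{pmatrix}$, $\omega,\theta$ holomorphic 1-forms, and $z$ compatible with the metric $ds^2_{1,1}=|\omega|^2+|\theta|^2$. Hyperbolic Gauss maps: $G=E_{11}/E_{21}$, $G_*=E_{12}/E_{22}$. The end is weakly complete if $ds^2_{1,1}$ is complete at $0$, and regular if $G,G_*$ have at most poles at $0$. *)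

theory Defs
  imports "HOL-Complex_Analysis.Complex_Analysis"
begin

text \<open>The universal cover of D* = {0 < |z| < 1} is modelled by the left half-plane
  LH = {w. Re w < 0} with covering map z = exp w; the deck transformation is w + 2 pi i.
  A matrix E = (E11 E12; E21 E22) is represented by its four entry functions on LH.
  The 1-forms omega, theta are written as omega(w) dw, theta(w) dw on LH.\<close>

definition LH :: "complex set" where
  "LH = {w. Re w < 0}"

text \<open>E is a holomorphic immersion LH -> SL(2,C) with E^{-1} dE = (0 theta; omega 0),
  the metric |omega|^2+|theta|^2 is positive definite (so that the coordinate is compatible
  with it), and f = E E^* is single-valued on D* (invariant under the deck transformation).\<close>
definition flat_front_end ::
  "(complex \<Rightarrow> complex) \<Rightarrow> (complex \<Rightarrow> complex) \<Rightarrow> (complex \<Rightarrow> complex) \<Rightarrow> (complex \<Rightarrow> complex)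
   \<Rightarrow> (complex \<Rightarrow> complex) \<Rightarrow> (complex \<Rightarrow> complex) \<Rightarrow> bool" where
  "flat_front_end E11 E12 E21 E22 \<omega> \<theta> \<longleftrightarrow>
     E11 holomorphic_on LH \<and> E12 holomorphic_on LH \<and> E21 holomorphic_on LH \<and> E22 holomorphic_on LH \<and>
     \<omega> holomorphic_on LH \<and> \<theta> holomorphic_on LH \<and>
     (\<forall>w\<in>LH. E11 w * E22 w - E12 w * E21 w = 1) \<and>
     (\<forall>w\<in>LH. (E11 has_field_derivative E12 w * \<omega> w) (at w) \<and>
              (E12 has_field_derivative E11 w * \<theta> w) (at w) \<and>
              (E21 has_field_derivative E22 w * \<omega> w) (at w) \<and>
              (E22 has_field_derivative E21 w * \<theta> w) (at w)) \<and>
     (\<forall>w\<in>LH. \<omega> w \<noteq> 0 \<or> \<theta> w \<noteq> 0) \<and>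
     (\<forall>w\<in>LH.
        let w' = w + 2 * pi * \<i> in
        cmod (E11 w') ^ 2 + cmod (E12 w') ^ 2 = cmod (E11 w) ^ 2 + cmod (E12 w) ^ 2 \<and>
        E11 w' * cnj (E21 w') + E12 w' * cnj (E22 w') = E11 w * cnj (E21 w) + E12 w * cnj (E22 w) \<and>
        cmod (E21 w') ^ 2 + cmod (E22 w') ^ 2 = cmod (E21 w) ^ 2 + cmod (E22 w) ^ 2)"

text \<open>Weak completeness: ds^2_{1,1} = (|omega|^2 + |theta|^2)|dw|^2 is complete at the end,
  i.e. every C^1 curve in LH running into the end (Re w -> -infinity, i.e. z = exp w -> 0)
  has infinite length.\<close>
definition weakly_complete :: "(complex \<Rightarrow> complex) \<Rightarrow> (complex \<Rightarrow> complex) \<Rightarrow> bool" where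
  "weakly_complete \<omega> \<theta> \<longleftrightarrow>
     (\<forall>\<gamma> :: real \<Rightarrow> complex.
        (\<forall>t\<in>{0..<1}. \<gamma> t \<in> LH) \<and> \<gamma> C1_differentiable_on {0..<1} \<and>
        filterlim (\<lambda>t. Re (\<gamma> t)) at_bot (at_left 1) \<longrightarrow>
        \<not> ((\<lambda>t. sqrt (cmod (\<omega> (\<gamma> t)) ^ 2 + cmod (\<theta> (\<gamma> t)) ^ 2) * norm (vector_derivative \<gamma> (at t)))
              integrable_on {0..<1}))"

definition end_filter :: "complex filter" where
  "end_filter = filtercomap exp (at 0)"

text \<open>A hyperbolic Gauss map num/den (values in the Riemann sphere; value infinity where den = 0)
  has at most a pole at 0: either it is identically infinity, or it descends to a function on
  D* which is meromorphic on the whole unit disc (i.e. at worst a pole at 0).\<close>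
definition regular_gauss :: "(complex \<Rightarrow> complex) \<Rightarrow> (complex \<Rightarrow> complex) \<Rightarrow> bool" where
  "regular_gauss num den \<longleftrightarrow>
     (\<forall>w\<in>LH. den w = 0) \<or>
     (\<exists>g. g meromorphic_on ball 0 1 \<and> (\<forall>w\<in>LH. den w \<noteq> 0 \<longrightarrow> g (exp w) = num w / den w))"

definition gauss_value_at_0 :: "(complex \<Rightarrow> complex) \<Rightarrow> (complex \<Rightarrow> complex) \<Rightarrow> complex \<Rightarrow> bool" where
  "gauss_value_at_0 num den a \<longleftrightarrow>
     (\<exists>w\<in>LH. den w \<noteq> 0) \<and> ((\<lambda>w. num w / den w) \<longlongrightarrow> a) end_filter"

text \<open>Projection pi of u u^* to the upper half-space model C x R_+.\<close>
definition proj_uhs :: "complex \<Rightarrow> complex \<Rightarrow> complex \<Rightarrow> complex \<Rightarrow> complex \<times> real" where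
  "proj_uhs u11 u12 u21 u22 =
     ((u11 * cnj u21 + u12 * cnj u22) / complex_of_real (cmod u21 ^ 2 + cmod u22 ^ 2),
      1 / (cmod u21 ^ 2 + cmod u22 ^ 2))"

end

theory Submission
  imports Defs
begin

text \<open>Write z = exp w. Suppose G_* does not tend to G(0) = a. Since det E = 1 gives
  G_* - G = -1/(E21 E22), the product E21 E22 then descends to a function K(z) holomorphic
  across z = 0, and so does G = g(z). The structure equations give dG = -\<omega>/E21^2 dw and
  d(E21 E22) = (E22^2 \<omega> + E21^2 \<theta>) dw, and E21 E22 = K forces E21^2 = u(z) with u
  holomorphic and nowhere zero. Hence \<omega> dw = -g' u dz and \<theta> dw = (K' + K^2 g')/u dz extend
  across the puncture, so a ray running into the end has finite length for ds^2_{1,1}, contradicting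
  weak completeness (the same argument with K = 0 shows that E22 does not vanish identically).
  So G and G_* both tend to a. The first coordinate of \<pi> \<circ> f is the mean of G and G_* with
  weights |E21|^2 and |E22|^2, and det E = 1 bounds the height 1/(|E21|^2 + |E22|^2) by |G - G_*|,
  so \<pi> \<circ> f tends to (a, 0).\<close>

lemma Re_less_ln_iff:
  assumes "0 < r"
  shows "Re w < ln r \<longleftrightarrow> norm (exp w) < r"
proof -
  have "Re w < ln r \<longleftrightarrow> exp (Re w) < exp (ln r)" by (rule exp_less_cancel_iff[symmetric])
  then show ?thesis using assms by simp
qed

lemma Re_less_ln_imp_LH: "0 < r \<Longrightarrow> r \<le> 1 \<Longrightarrow> Re w < ln r \<Longrightarrow> w \<in> LH"
proof -
  assume "0 < r" "r \<le> 1" "Re w < ln r"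
  moreover have "ln r \<le> 0" using \<open>0 < r\<close> \<open>r \<le> 1\<close> by simp
  ultimately have "Re w < 0" by linarith
  then show "w \<in> LH" by (simp add: LH_def)
qed

lemma exp_Ln_punctured_ball:
  assumes "0 < r" "z \<in> ball 0 r - {0}"
  shows "Re (Ln z) < ln r" "exp (Ln z) = z"
  using assms Re_less_ln_iff[of r "Ln z"] by auto

lemma has_field_derivative_through_exp:
  assumes "0 < r" and h: "h holomorphic_on ball 0 r"
    and f_eq: "\<And>w. Re w < ln r \<Longrightarrow> f w = h (exp w)"
    and w: "Re w < ln r" and f': "(f has_field_derivative f') (at w)"
  shows "f' = exp w * deriv h (exp w)"
proof -
  have "exp w \<in> ball 0 r" using w \<open>0 < r\<close> Re_less_ln_iff by simp
  then have "((\<lambda>w. h (exp w)) has_field_derivative deriv h (exp w) * exp w) (at w)"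
    using DERIV_chain2[OF holomorphic_derivI[OF h open_ball] DERIV_exp] by simp
  then have "(f has_field_derivative deriv h (exp w) * exp w) (at w)"
    by (rule has_field_derivative_transform_within_open[of _ _ _ "{w. Re w < ln r}"])
       (use w f_eq open_halfspace_Re_lt in auto)
  then show ?thesis using DERIV_unique[OF f'] by (simp add: mult.commute)
qed

lemma eventually_end_filter:
  "eventually P end_filter \<longleftrightarrow> (\<exists>R. \<forall>w. Re w < R \<longrightarrow> P w)"
proof
  assume "eventually P end_filter"
  then obtain Q where Q: "eventually Q (at (0::complex))" "\<And>x. Q (exp x) \<Longrightarrow> P x"
    unfolding end_filter_def eventually_filtercomap by blast
  then obtain d where d: "d > 0" "\<And>x. x \<noteq> 0 \<Longrightarrow> dist x 0 < d \<Longrightarrow> Q x"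
    unfolding eventually_at by blast
  have "P w" if "Re w < ln d" for w
    using that d Q Re_less_ln_iff[of d w] by simp
  then show "\<exists>R. \<forall>w. Re w < R \<longrightarrow> P w" by blast
next
  assume "\<exists>R. \<forall>w. Re w < R \<longrightarrow> P w"
  then obtain R where R: "\<And>w. Re w < R \<Longrightarrow> P w" by blast
  have "eventually (\<lambda>z. norm z < exp R) (at (0::complex))"
    unfolding eventually_at by (intro exI[of _ "exp R"]) auto
  moreover have "P w" if "norm (exp w) < exp R" for w
    using that R Re_less_ln_iff[of "exp R" w] by simp
  ultimately show "eventually P end_filter"
    unfolding end_filter_def eventually_filtercomap by blast
qed

lemma eventually_in_LH_end_filter: "eventually (\<lambda>w. w \<in> LH) end_filter"
  unfolding eventually_end_filter LH_def by auto

lemma filtermap_exp_end_filter: "filtermap exp end_filter = at 0"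
proof (rule antisym)
  show "filtermap exp end_filter \<le> at 0"
    unfolding end_filter_def by (rule filtermap_filtercomap)
  show "at 0 \<le> filtermap exp end_filter"
  proof (rule filter_leI)
    fix P assume "eventually P (filtermap exp end_filter)"
    then obtain R where R: "\<And>w. Re w < R \<Longrightarrow> P (exp w)"
      unfolding eventually_filtermap eventually_end_filter by blast
    have "P z" if "z \<noteq> 0" "dist z 0 < exp R" for z
      using that R[of "Ln z"] Re_less_ln_iff[of "exp R" "Ln z"] by simp
    then show "eventually P (at 0)"
      unfolding eventually_at by (intro exI[of _ "exp R"]) auto
  qed
qed

lemma tendsto_end_filter_exp_iff:
  "((\<lambda>w. f (exp w)) \<longlongrightarrow> l) end_filter \<longleftrightarrow> (f \<longlongrightarrow> l) (at 0)"
  by (simp add: filterlim_filtermap[symmetric] filtermap_exp_end_filter)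

section \<open>Weak completeness\<close>

lemma ray_to_end:
  fixes R :: real
  defines "\<gamma> \<equiv> \<lambda>t::real. complex_of_real (R + ln (1 - t))"
  assumes "R < 0"
  shows "\<And>t. t \<in> {0..<1} \<Longrightarrow> \<gamma> t \<in> LH"
    and "\<gamma> C1_differentiable_on {0..<1}"
    and "filterlim (\<lambda>t. Re (\<gamma> t)) at_bot (at_left 1)"
    and "\<And>t. t < 1 \<Longrightarrow> norm (vector_derivative \<gamma> (at t)) = 1 / (1 - t)"
proof -
  define \<gamma>' where "\<gamma>' = (\<lambda>t::real. complex_of_real (- 1 / (1 - t)))"
  have der: "(\<gamma> has_vector_derivative \<gamma>' t) (at t)" if "t < 1" for t
  proof -
    have "((\<lambda>t. R + ln (1 - t)) has_real_derivative - 1 / (1 - t)) (at t)"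
      using that by (auto intro!: derivative_eq_intros)
    then show ?thesis
      unfolding \<gamma>_def \<gamma>'_def by (rule has_vector_derivative_of_real)
  qed
  then show "norm (vector_derivative \<gamma> (at t)) = 1 / (1 - t)" if "t < 1" for t
  proof -
    have "norm (\<gamma>' t) = 1 / (1 - t)"
      unfolding \<gamma>'_def norm_of_real using that by simp
    then show ?thesis using vector_derivative_at[OF der[OF that]] by simp
  qed
  show "\<gamma> t \<in> LH" if "t \<in> {0..<1}" for t
  proof -
    have "ln (1 - t) \<le> 0" using that by simp
    then show ?thesis using \<open>R < 0\<close> by (simp add: LH_def \<gamma>_def)
  qed
  have "continuous_on {0..<1} \<gamma>'"
    unfolding \<gamma>'_def by (intro continuous_intros) auto
  then show "\<gamma> C1_differentiable_on {0..<1}"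
    unfolding C1_differentiable_on_def using der by (intro exI[of _ \<gamma>']) auto
  show "filterlim (\<lambda>t. Re (\<gamma> t)) at_bot (at_left 1)"
    unfolding filterlim_at_bot
  proof
    fix Z :: real
    have "eventually (\<lambda>t. t \<in> {1 - exp (Z - R)<..<1}) (at_left (1::real))"
      by (rule eventually_at_left_real) simp
    then show "eventually (\<lambda>t. Re (\<gamma> t) \<le> Z) (at_left 1)"
    proof (rule eventually_mono)
      fix t assume "t \<in> {1 - exp (Z - R)<..<1}"
      then have "ln (1 - t) < ln (exp (Z - R))"
        by (subst ln_less_cancel_iff) auto
      then have "ln (1 - t) < Z - R" by simp
      then show "Re (\<gamma> t) \<le> Z" by (simp add: \<gamma>_def)
    qed
  qed
qed

lemma weakly_complete_not_exp_bounded: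
  assumes wc: "weakly_complete \<omega> \<theta>"
    and cont: "continuous_on LH \<omega>" "continuous_on LH \<theta>"
    and "R < 0"
    and bound: "\<And>w. Re w \<le> R \<Longrightarrow> sqrt (cmod (\<omega> w) ^ 2 + cmod (\<theta> w) ^ 2) \<le> M * exp (Re w)"
  shows False
proof -
  define \<gamma> where "\<gamma> = (\<lambda>t::real. complex_of_real (R + ln (1 - t)))"
  have \<gamma>_eq: "\<And>t. complex_of_real (R + ln (1 - t)) = \<gamma> t" by (simp add: \<gamma>_def)
  note ray = ray_to_end[OF \<open>R < 0\<close>, unfolded \<gamma>_eq]
  define speed where "speed = (\<lambda>t. sqrt (cmod (\<omega> (\<gamma> t)) ^ 2 + cmod (\<theta> (\<gamma> t)) ^ 2) / (1 - t))"
  have speed_eq: "sqrt (cmod (\<omega> (\<gamma> t)) ^ 2 + cmod (\<theta> (\<gamma> t)) ^ 2) * norm (vector_derivative \<gamma> (at t))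
      = speed t" if "t \<in> {0..<1}" for t
    using that ray(4)[of t] by (simp add: speed_def norm_divide)
  have "continuous_on {0..<1} \<gamma>"
    unfolding \<gamma>_def by (intro continuous_intros) auto
  moreover have "\<gamma> ` {0..<1} \<subseteq> LH"
    using ray(1) by blast
  ultimately have "continuous_on {0..<1} (\<lambda>t. \<omega> (\<gamma> t))" "continuous_on {0..<1} (\<lambda>t. \<theta> (\<gamma> t))"
    by (auto intro: continuous_on_compose2[OF cont(1)] continuous_on_compose2[OF cont(2)])
  then have "continuous_on {0..<1} speed"
    unfolding speed_def by (intro continuous_intros) auto
  \<comment> \<open>On the ray exp (Re w) = exp R * (1 - t), which cancels the speed 1/(1 - t).\<close>
  then have "speed integrable_on {0..<1}"
  proof (rule measurable_bounded_by_integrable_imp_integrable[OF continuous_imp_measurable_on_sets_lebesgue])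
    show "(\<lambda>_. M * exp R) integrable_on {0..<1::real}"
      by (intro integrable_on_const bounded_set_imp_lmeasurable) auto
  next
    fix t :: real assume t: "t \<in> {0..<1}"
    have "Re (\<gamma> t) \<le> R" using t by (simp add: \<gamma>_def)
    moreover have "exp (Re (\<gamma> t)) = exp R * (1 - t)" using t by (simp add: \<gamma>_def exp_add)
    ultimately have "sqrt (cmod (\<omega> (\<gamma> t)) ^ 2 + cmod (\<theta> (\<gamma> t)) ^ 2) \<le> M * exp R * (1 - t)"
      using bound by (metis mult.assoc)
    then show "norm (speed t) \<le> M * exp R" using t by (simp add: speed_def divide_le_eq)
  qed auto
  then have "(\<lambda>t. sqrt (cmod (\<omega> (\<gamma> t)) ^ 2 + cmod (\<theta> (\<gamma> t)) ^ 2) * norm (vector_derivative \<gamma> (at t)))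
      integrable_on {0..<1}"
    by (simp only: integrable_cong[OF speed_eq])
  moreover have "(\<forall>t\<in>{0..<1}. \<gamma> t \<in> LH) \<and> \<gamma> C1_differentiable_on {0..<1} \<and>
      filterlim (\<lambda>t. Re (\<gamma> t)) at_bot (at_left 1)"
    using ray(1-3) by blast
  ultimately show False
    using wc unfolding weakly_complete_def by blast
qed

lemma weakly_complete_forms_not_extend:
  assumes wc: "weakly_complete \<omega> \<theta>"
    and cont: "continuous_on LH \<omega>" "continuous_on LH \<theta>"
    and "0 < r" and A: "continuous_on (ball 0 r) A" and B: "continuous_on (ball 0 r) B"
    and \<omega>_eq: "\<And>w. Re w < ln r \<Longrightarrow> \<omega> w = exp w * A (exp w)"
    and \<theta>_eq: "\<And>w. Re w < ln r \<Longrightarrow> \<theta> w = exp w * B (exp w)"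
  shows False
proof -
  have sub: "cball 0 (r / 2) \<subseteq> ball 0 r" using \<open>0 < r\<close> by auto
  have "compact (A ` cball 0 (r / 2))" "compact (B ` cball 0 (r / 2))"
    using A B sub by (auto intro!: compact_continuous_image intro: continuous_on_subset)
  then obtain MA MB where MA: "\<And>z. z \<in> cball 0 (r / 2) \<Longrightarrow> norm (A z) \<le> MA"
      and MB: "\<And>z. z \<in> cball 0 (r / 2) \<Longrightarrow> norm (B z) \<le> MB"
    by (metis compact_imp_bounded bounded_iff image_eqI)
  define R where "R = min (ln (r / 2)) (- 1)"
  have "sqrt (cmod (\<omega> w) ^ 2 + cmod (\<theta> w) ^ 2) \<le> (MA + MB) * exp (Re w)" if "Re w \<le> R" for w
  proof -
    have "exp (Re w) \<le> r / 2"
      using that ln_ge_iff[of "r / 2" "Re w"] \<open>0 < r\<close> by (simp add: R_def)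
    then have z: "exp w \<in> cball 0 (r / 2)" by simp
    have "Re w < ln r" using z \<open>0 < r\<close> Re_less_ln_iff by simp
    then have "cmod (\<omega> w) + cmod (\<theta> w) = exp (Re w) * (norm (A (exp w)) + norm (B (exp w)))"
      by (simp add: \<omega>_eq \<theta>_eq norm_mult algebra_simps)
    also have "\<dots> \<le> exp (Re w) * (MA + MB)"
      using MA[OF z] MB[OF z] by (intro mult_left_mono add_mono) auto
    finally show ?thesis
      using real_sqrt_sum_squares_triangle_ineq[of "cmod (\<omega> w)" 0 0 "cmod (\<theta> w)"]
      by (simp add: algebra_simps)
  qed
  moreover have "R < 0" by (simp add: R_def)
  ultimately show False
    using weakly_complete_not_exp_bounded[OF wc cont] by blast
qed

section \<open>Gauss maps near the end\<close>

lemma den_nonzero_near_end: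
  assumes num: "num holomorphic_on LH" and den: "den holomorphic_on LH"
    and no_common_zero: "\<And>w. w \<in> LH \<Longrightarrow> num w \<noteq> 0 \<or> den w \<noteq> 0"
    and "\<exists>w\<in>LH. den w \<noteq> 0"
    and r: "0 < r" "r \<le> 1" and q: "continuous_on (ball 0 r - {0}) q"
    and q_eq: "\<And>w. Re w < ln r \<Longrightarrow> den w \<noteq> 0 \<Longrightarrow> q (exp w) = num w / den w"
    and w0: "Re w0 < ln r"
  shows "den w0 \<noteq> 0"
proof
  assume "den w0 = 0"
  have LH: "open LH" "connected LH"
    unfolding LH_def by (auto intro: open_halfspace_Re_lt convex_connected convex_halfspace_Re_lt)
  have "w0 \<in> LH" using Re_less_ln_imp_LH[OF r w0] .
  \<comment> \<open>Zeros of den are isolated, so num = q(e^w) den holds on a punctured neighbourhood of w0.\<close>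
  then obtain \<epsilon> where "0 < \<epsilon>" and nz: "\<And>w. w \<in> ball w0 \<epsilon> - {w0} \<Longrightarrow> den w \<noteq> 0"
    using isolated_zeros[OF den LH _ \<open>den w0 = 0\<close>] assms(4) by metis
  have "eventually (\<lambda>w. w \<in> ball w0 \<epsilon> \<inter> {w. Re w < ln r}) (nhds w0)"
    using \<open>0 < \<epsilon>\<close> w0 by (intro eventually_nhds_in_open open_Int open_halfspace_Re_lt) auto
  then have "eventually (\<lambda>w. num w = q (exp w) * den w) (at w0)"
    unfolding eventually_at_filter by eventually_elim (use nz q_eq in auto)
  moreover have "((\<lambda>w. q (exp w) * den w) \<longlongrightarrow> q (exp w0) * den w0) (at w0)"
  proof (intro tendsto_intros)
    have "exp w0 \<in> ball 0 r - {0}" using w0 r(1) Re_less_ln_iff by simp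
    then have "isCont q (exp w0)"
      using q by (simp add: continuous_on_eq_continuous_at open_Diff)
    then show "((\<lambda>w. q (exp w)) \<longlongrightarrow> q (exp w0)) (at w0)"
      by (intro isCont_tendsto_compose[of _ q] tendsto_intros)
    show "(den \<longlongrightarrow> den w0) (at w0)"
      using den \<open>w0 \<in> LH\<close> LH(1) holomorphic_on_imp_continuous_on
      by (metis at_within_open continuous_on_def)
  qed
  moreover have "(num \<longlongrightarrow> num w0) (at w0)"
    using num \<open>w0 \<in> LH\<close> LH(1) holomorphic_on_imp_continuous_on
    by (metis at_within_open continuous_on_def)
  ultimately have "num w0 = q (exp w0) * den w0"
    using tendsto_unique[OF at_neq_bot] Lim_transform_eventually by metis
  then show False using no_common_zero[OF \<open>w0 \<in> LH\<close>] \<open>den w0 = 0\<close> by simp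
qed

lemma meromorphic_on_ball_at_0:
  assumes "g meromorphic_on ball 0 1"
  obtains r where "0 < r" "r \<le> 1" "g holomorphic_on ball 0 r - {0}" "not_essential g 0"
proof -
  have m: "g meromorphic_on {0}" by (rule meromorphic_on_subset[OF assms]) auto
  obtain r where "r > 0" "g analytic_on ball 0 r - {0}"
    using meromorphic_on_isolated_singularity[OF m] unfolding isolated_singularity_at_def by blast
  then have "g holomorphic_on ball 0 (min r 1) - {0}"
    by (auto intro: holomorphic_on_subset[OF analytic_imp_holomorphic])
  then show thesis using that[of "min r 1"] \<open>r > 0\<close> meromorphic_on_not_essential[OF m] by auto
qed

lemma regular_gauss_near_end:
  assumes num: "num holomorphic_on LH" and den: "den holomorphic_on LH"
    and no_common_zero: "\<And>w. w \<in> LH \<Longrightarrow> num w \<noteq> 0 \<or> den w \<noteq> 0"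
    and den_ne: "\<exists>w\<in>LH. den w \<noteq> 0" and "regular_gauss num den"
  obtains r q where "0 < r" "r \<le> 1" "q holomorphic_on ball 0 r - {0}" "not_essential q 0"
    "\<And>w. Re w < ln r \<Longrightarrow> den w \<noteq> 0 \<and> q (exp w) = num w / den w"
proof -
  obtain q where q: "q meromorphic_on ball 0 1"
    and q_eq: "\<And>w. w \<in> LH \<Longrightarrow> den w \<noteq> 0 \<Longrightarrow> q (exp w) = num w / den w"
    using \<open>regular_gauss num den\<close> den_ne unfolding regular_gauss_def by blast
  from q obtain r where r: "0 < r" "r \<le> 1" "q holomorphic_on ball 0 r - {0}" "not_essential q 0"
    by (rule meromorphic_on_ball_at_0)
  have q_eq': "q (exp w) = num w / den w" if "Re w < ln r" "den w \<noteq> 0" for w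
    using q_eq Re_less_ln_imp_LH[OF r(1,2)] that by blast
  have "den w \<noteq> 0" if "Re w < ln r" for w
    using den_nonzero_near_end[OF num den no_common_zero den_ne r(1,2)
        holomorphic_on_imp_continuous_on[OF r(3)] q_eq' that] .
  with r q_eq' show thesis using that by blast
qed

lemma gauss_value_near_end:
  assumes num: "num holomorphic_on LH" and den: "den holomorphic_on LH"
    and no_common_zero: "\<And>w. w \<in> LH \<Longrightarrow> num w \<noteq> 0 \<or> den w \<noteq> 0"
    and "regular_gauss num den" and "gauss_value_at_0 num den a"
  obtains r q where "0 < r" "r \<le> 1" "q holomorphic_on ball 0 r" "q 0 = a"
    "\<And>w. Re w < ln r \<Longrightarrow> den w \<noteq> 0 \<and> q (exp w) = num w / den w"
proof -
  have den_ne: "\<exists>w\<in>LH. den w \<noteq> 0" and lim: "((\<lambda>w. num w / den w) \<longlongrightarrow> a) end_filter"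
    using \<open>gauss_value_at_0 num den a\<close> unfolding gauss_value_at_0_def by blast+
  obtain r q where r: "0 < r" "r \<le> 1" "q holomorphic_on ball 0 r - {0}"
      and q_eq: "\<And>w. Re w < ln r \<Longrightarrow> den w \<noteq> 0 \<and> q (exp w) = num w / den w"
    using regular_gauss_near_end[OF num den no_common_zero den_ne \<open>regular_gauss num den\<close>] by blast
  have "eventually (\<lambda>w. num w / den w = q (exp w)) end_filter"
    unfolding eventually_end_filter using q_eq by (intro exI[of _ "ln r"]) simp
  then have "((\<lambda>w. q (exp w)) \<longlongrightarrow> a) end_filter"
    by (rule Lim_transform_eventually[OF lim])
  then have "(q \<longlongrightarrow> a) (at 0)"
    by (simp add: tendsto_end_filter_exp_iff)
  then have "(\<lambda>z. if z = 0 then a else q z) holomorphic_on ball 0 r"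
    by (intro removable_singularity[OF r(3)]) auto
  moreover have "\<And>w. Re w < ln r \<Longrightarrow> den w \<noteq> 0 \<and> (if exp w = 0 then a else q (exp w)) = num w / den w"
    using q_eq by simp
  ultimately show thesis using that[of r] r(1,2) by simp
qed

lemma eventually_den_nonzero_end_filter:
  assumes "num holomorphic_on LH" "den holomorphic_on LH"
    and "\<And>w. w \<in> LH \<Longrightarrow> num w \<noteq> 0 \<or> den w \<noteq> 0"
    and "regular_gauss num den" "gauss_value_at_0 num den a"
  shows "eventually (\<lambda>w. den w \<noteq> 0) end_filter"
proof -
  obtain r q where "\<And>w. Re w < ln r \<Longrightarrow> den w \<noteq> 0 \<and> q (exp w) = num w / den w"
    using gauss_value_near_end[OF assms] by blast
  then show ?thesis unfolding eventually_end_filter by blast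
qed

lemma tendsto_inverse_diff_if_not_essential:
  assumes "not_essential f z" and g: "(g \<longlongrightarrow> a) (at z)" and "\<not> (f \<longlongrightarrow> a) (at z)"
  obtains c where "((\<lambda>x. inverse (f x - g x)) \<longlongrightarrow> c) (at z)"
proof -
  obtain L where "(f \<longlongrightarrow> L) (at z) \<or> is_pole f z"
    using \<open>not_essential f z\<close> unfolding not_essential_def by blast
  then show thesis
  proof
    assume f: "(f \<longlongrightarrow> L) (at z)"
    then have "L - a \<noteq> 0" using \<open>\<not> (f \<longlongrightarrow> a) (at z)\<close> by auto
    then show thesis using that tendsto_inverse[OF tendsto_diff[OF f g]] by blast
  next
    assume "is_pole f z"
    then have "filterlim (\<lambda>x. f x - g x) at_infinity (at z)"
      unfolding is_pole_def diff_conv_add_uminus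
      by (rule tendsto_add_filterlim_at_infinity'[OF _ tendsto_minus[OF g]])
    then show thesis using that filterlim_compose[OF tendsto_inverse_0] by blast
  qed
qed

section \<open>Consequences of the structure equations\<close>

context
  fixes E11 E12 E21 E22 \<omega> \<theta> :: "complex \<Rightarrow> complex"
  assumes ff: "flat_front_end E11 E12 E21 E22 \<omega> \<theta>"
begin

lemma flat_front_holomorphic:
  "E11 holomorphic_on LH" "E12 holomorphic_on LH" "E21 holomorphic_on LH" "E22 holomorphic_on LH"
  "\<omega> holomorphic_on LH" "\<theta> holomorphic_on LH"
  using ff unfolding flat_front_end_def by blast+

lemma flat_front_det: "w \<in> LH \<Longrightarrow> E11 w * E22 w - E12 w * E21 w = 1"
  using ff unfolding flat_front_end_def by blast

lemma flat_front_derivs: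
  assumes "w \<in> LH"
  shows "(E11 has_field_derivative E12 w * \<omega> w) (at w)" "(E12 has_field_derivative E11 w * \<theta> w) (at w)"
    "(E21 has_field_derivative E22 w * \<omega> w) (at w)" "(E22 has_field_derivative E21 w * \<theta> w) (at w)"
  using ff assms unfolding flat_front_end_def by blast+

lemma has_field_derivative_gauss_map:
  assumes w: "w \<in> LH" "E21 w \<noteq> 0"
  shows "((\<lambda>w. E11 w / E21 w) has_field_derivative - \<omega> w / E21 w ^ 2) (at w)"
proof -
  have "((\<lambda>w. E11 w / E21 w) has_field_derivative
      (E12 w * \<omega> w * E21 w - E11 w * (E22 w * \<omega> w)) / (E21 w * E21 w)) (at w)"
    using flat_front_derivs[OF w(1)] w(2) by (intro DERIV_divide) auto
  moreover have "E12 w * \<omega> w * E21 w - E11 w * (E22 w * \<omega> w)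
      = - \<omega> w * (E11 w * E22 w - E12 w * E21 w)"
    by (simp add: algebra_simps)
  ultimately show ?thesis using flat_front_det[OF w(1)] by (simp add: power2_eq_square)
qed

lemma has_field_derivative_E21_E22:
  assumes "w \<in> LH"
  shows "((\<lambda>w. E21 w * E22 w) has_field_derivative E22 w ^ 2 * \<omega> w + E21 w ^ 2 * \<theta> w) (at w)"
  using DERIV_mult[OF flat_front_derivs(3,4)[OF assms]] by (simp add: power2_eq_square algebra_simps)

lemma omega_eq_deriv_gauss:
  assumes r: "0 < r" "r \<le> 1" and g: "g holomorphic_on ball 0 r"
    and nz: "\<And>w. Re w < ln r \<Longrightarrow> E21 w \<noteq> 0"
    and gq: "\<And>w. Re w < ln r \<Longrightarrow> g (exp w) = E11 w / E21 w"
    and w: "Re w < ln r"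
  shows "\<omega> w = - exp w * deriv g (exp w) * E21 w ^ 2"
proof -
  have "- \<omega> w / E21 w ^ 2 = exp w * deriv g (exp w)"
    using has_field_derivative_through_exp[OF r(1) g gq[symmetric] w
        has_field_derivative_gauss_map[OF Re_less_ln_imp_LH[OF r w] nz[OF w]]] .
  then have "- \<omega> w = exp w * deriv g (exp w) * E21 w ^ 2"
    using nz[OF w] by (simp add: field_simps)
  then show ?thesis by (metis minus_minus mult_minus_left)
qed

lemma has_field_derivative_E21_sq_exp_primitive:
  assumes r: "0 < r" "r \<le> 1" and g: "g holomorphic_on ball 0 r"
    and nz: "\<And>w. Re w < ln r \<Longrightarrow> E21 w \<noteq> 0"
    and gq: "\<And>w. Re w < ln r \<Longrightarrow> g (exp w) = E11 w / E21 w"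
    and kq: "\<And>w. Re w < ln r \<Longrightarrow> E21 w * E22 w = K (exp w)"
    and \<Phi>: "\<And>z. z \<in> ball 0 r \<Longrightarrow> (\<Phi> has_field_derivative K z * deriv g z) (at z)"
    and w: "Re w < ln r"
  shows "((\<lambda>w. E21 w ^ 2 * exp (2 * \<Phi> (exp w))) has_field_derivative 0) (at w)"
proof -
  have z: "exp w \<in> ball 0 r" using w r(1) Re_less_ln_iff by simp
  \<comment> \<open>By E21 E22 = K, E21' = E22 \<omega> = - e^w K g' E21, which exp (\<Phi> (e^w)) compensates.\<close>
  have "((\<lambda>w. E21 w ^ 2 * exp (2 * \<Phi> (exp w))) has_field_derivative
      2 * E21 w * (E22 w * \<omega> w) * exp (2 * \<Phi> (exp w))
      + E21 w ^ 2 * (exp (2 * \<Phi> (exp w)) * (2 * (K (exp w) * deriv g (exp w) * exp w)))) (at w)"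
    using flat_front_derivs(3)[OF Re_less_ln_imp_LH[OF r w]] DERIV_chain2[OF \<Phi>[OF z] DERIV_exp]
    by (auto intro!: derivative_eq_intros simp: power2_eq_square)
  also have "2 * E21 w * (E22 w * \<omega> w) * exp (2 * \<Phi> (exp w))
      + E21 w ^ 2 * (exp (2 * \<Phi> (exp w)) * (2 * (K (exp w) * deriv g (exp w) * exp w)))
    = 2 * exp (2 * \<Phi> (exp w)) * (E21 w * E22 w * \<omega> w + exp w * K (exp w) * deriv g (exp w) * E21 w ^ 2)"
    by (simp add: algebra_simps)
  also have "E21 w * E22 w * \<omega> w = - exp w * K (exp w) * deriv g (exp w) * E21 w ^ 2"
    using kq[OF w] omega_eq_deriv_gauss[OF r g nz gq w] by (simp add: algebra_simps)
  finally show ?thesis by simp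
qed

lemma E21_sq_descends:
  assumes r: "0 < r" "r \<le> 1"
    and g: "g holomorphic_on ball 0 r" and K: "K holomorphic_on ball 0 r"
    and nz: "\<And>w. Re w < ln r \<Longrightarrow> E21 w \<noteq> 0"
    and gq: "\<And>w. Re w < ln r \<Longrightarrow> g (exp w) = E11 w / E21 w"
    and kq: "\<And>w. Re w < ln r \<Longrightarrow> E21 w * E22 w = K (exp w)"
  obtains u where "u holomorphic_on ball 0 r" "\<And>z. z \<in> ball 0 r \<Longrightarrow> u z \<noteq> 0"
    "\<And>w. Re w < ln r \<Longrightarrow> E21 w ^ 2 = u (exp w)"
proof -
  define W where "W = {w. Re w < ln r}"
  obtain \<Phi> where \<Phi>_within:
      "\<And>z. z \<in> ball 0 r \<Longrightarrow> (\<Phi> has_field_derivative K z * deriv g z) (at z within ball 0 r)"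
    using holomorphic_convex_primitive'[OF convex_ball open_ball
        holomorphic_on_mult[OF K holomorphic_deriv[OF g open_ball]]] by blast
  have \<Phi>: "(\<Phi> has_field_derivative K z * deriv g z) (at z)" if "z \<in> ball 0 r" for z
    using \<Phi>_within[OF that] at_within_open[OF that open_ball] by simp
  define h where "h = (\<lambda>w. E21 w ^ 2 * exp (2 * \<Phi> (exp w)))"
  have "(h has_field_derivative 0) (at w within W)" if "w \<in> W" for w
    using has_field_derivative_E21_sq_exp_primitive[OF r g nz gq kq \<Phi>] that
    unfolding h_def W_def by (blast intro: has_field_derivative_at_within)
  then obtain c where c: "\<And>w. w \<in> W \<Longrightarrow> h w = c"
    using has_field_derivative_zero_constant[of W] convex_halfspace_Re_lt unfolding W_def by blast
  have "complex_of_real (ln r - 1) \<in> W" by (simp add: W_def)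
  then have "c \<noteq> 0" using c nz[of "complex_of_real (ln r - 1)"] by (auto simp: W_def h_def)
  show thesis
  proof
    have "\<Phi> holomorphic_on ball 0 r"
      using \<Phi> holomorphic_on_open[OF open_ball] by blast
    then show "(\<lambda>z. c * exp (- 2 * \<Phi> z)) holomorphic_on ball 0 r"
      by (intro holomorphic_intros)
    show "c * exp (- 2 * \<Phi> z) \<noteq> 0" for z using \<open>c \<noteq> 0\<close> by simp
    show "E21 w ^ 2 = c * exp (- 2 * \<Phi> (exp w))" if "Re w < ln r" for w
      using c[of w] that by (simp add: W_def h_def exp_minus field_simps)
  qed
qed

lemma not_weakly_complete_if_gauss_map_and_E21_E22_extend:
  assumes r: "0 < r" "r \<le> 1"
    and g: "g holomorphic_on ball 0 r" and K: "K holomorphic_on ball 0 r"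
    and nz: "\<And>w. Re w < ln r \<Longrightarrow> E21 w \<noteq> 0"
    and gq: "\<And>w. Re w < ln r \<Longrightarrow> g (exp w) = E11 w / E21 w"
    and kq: "\<And>w. Re w < ln r \<Longrightarrow> E21 w * E22 w = K (exp w)"
  shows "\<not> weakly_complete \<omega> \<theta>"
proof
  assume wc: "weakly_complete \<omega> \<theta>"
  obtain u where u: "u holomorphic_on ball 0 r" "\<And>z. z \<in> ball 0 r \<Longrightarrow> u z \<noteq> 0"
      and u_eq: "\<And>w. Re w < ln r \<Longrightarrow> E21 w ^ 2 = u (exp w)"
    using E21_sq_descends[OF r g K nz gq kq] by blast
  define A where "A = (\<lambda>z. - deriv g z * u z)"
  define B where "B = (\<lambda>z. (deriv K z + K z ^ 2 * deriv g z) / u z)"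
  have "A holomorphic_on ball 0 r" "B holomorphic_on ball 0 r"
    unfolding A_def B_def using g K u by (auto intro!: holomorphic_intros)
  then have "continuous_on (ball 0 r) A" "continuous_on (ball 0 r) B"
    by (auto intro: holomorphic_on_imp_continuous_on)
  moreover have "\<omega> w = exp w * A (exp w)" if "Re w < ln r" for w
    using omega_eq_deriv_gauss[OF r g nz gq that] u_eq[OF that] by (simp add: A_def)
  moreover have "\<theta> w = exp w * B (exp w)" if w: "Re w < ln r" for w
  proof -
    have "E22 w ^ 2 * \<omega> w + E21 w ^ 2 * \<theta> w = exp w * deriv K (exp w)"
      using has_field_derivative_through_exp[OF r(1) K kq w
          has_field_derivative_E21_E22[OF Re_less_ln_imp_LH[OF r w]]] .
    moreover have "E22 w ^ 2 * \<omega> w = - exp w * K (exp w) ^ 2 * deriv g (exp w)"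
      using omega_eq_deriv_gauss[OF r g nz gq w] kq[OF w, symmetric]
      by (simp add: power2_eq_square algebra_simps)
    moreover have "u (exp w) \<noteq> 0" using u(2) w r(1) Re_less_ln_iff by simp
    ultimately show ?thesis using u_eq[OF w] by (simp add: B_def field_simps)
  qed
  moreover have "continuous_on LH \<omega>" "continuous_on LH \<theta>"
    using flat_front_holomorphic by (auto intro: holomorphic_on_imp_continuous_on)
  ultimately show False
    using weakly_complete_forms_not_extend[OF wc _ _ r(1)] by blast
qed

lemma E21_E22_descends:
  assumes r: "0 < r" "r \<le> 1"
    and g: "g holomorphic_on ball 0 r" and gs: "gs holomorphic_on ball 0 r - {0}"
    and gq: "\<And>w. Re w < ln r \<Longrightarrow> E21 w \<noteq> 0 \<and> g (exp w) = E11 w / E21 w"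
    and gsq: "\<And>w. Re w < ln r \<Longrightarrow> E22 w \<noteq> 0 \<and> gs (exp w) = E12 w / E22 w"
    and lim: "((\<lambda>z. inverse (gs z - g z)) \<longlongrightarrow> c) (at 0)"
  obtains K where "K holomorphic_on ball 0 r" "\<And>w. Re w < ln r \<Longrightarrow> E21 w * E22 w = K (exp w)"
proof -
  have diff_eq: "gs (exp w) - g (exp w) = - inverse (E21 w * E22 w)" if "Re w < ln r" for w
  proof -
    have "E11 w * E22 w - E12 w * E21 w = 1"
      using flat_front_det[OF Re_less_ln_imp_LH[OF r that]] .
    with gq[OF that] gsq[OF that] show ?thesis by (simp add: field_simps)
  qed
  define K where "K = (\<lambda>z. if z = 0 then - c else - inverse (gs z - g z))"
  have "gs z - g z \<noteq> 0" if "z \<in> ball 0 r - {0}" for z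
  proof -
    have "Re (Ln z) < ln r" "exp (Ln z) = z" using exp_Ln_punctured_ball[OF r(1) that] by auto
    then show ?thesis using diff_eq gq gsq by force
  qed
  then have "(\<lambda>z. - inverse (gs z - g z)) holomorphic_on ball 0 r - {0}"
    using gs holomorphic_on_subset[OF g] by (intro holomorphic_intros) auto
  then have "K holomorphic_on ball 0 r"
    unfolding K_def by (rule removable_singularity[OF _ open_ball]) (use lim in \<open>auto intro: tendsto_minus\<close>)
  moreover have "E21 w * E22 w = K (exp w)" if "Re w < ln r" for w
    using diff_eq[OF that] by (simp add: K_def)
  ultimately show thesis using that by blast
qed

lemma flat_front_no_common_zero:
  assumes "w \<in> LH"
  shows "E11 w \<noteq> 0 \<or> E21 w \<noteq> 0" "E12 w \<noteq> 0 \<or> E22 w \<noteq> 0"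
  using flat_front_det[OF assms] by auto

lemma weakly_complete_E22_not_identically_zero:
  assumes wc: "weakly_complete \<omega> \<theta>"
    and r: "0 < r" "r \<le> 1" and g: "g holomorphic_on ball 0 r"
    and gq: "\<And>w. Re w < ln r \<Longrightarrow> E21 w \<noteq> 0 \<and> g (exp w) = E11 w / E21 w"
  shows "\<exists>w\<in>LH. E22 w \<noteq> 0"
proof (rule ccontr)
  assume "\<not> (\<exists>w\<in>LH. E22 w \<noteq> 0)"
  then have "E21 w * E22 w = (\<lambda>_. 0) (exp w)" if "Re w < ln r" for w
    using Re_less_ln_imp_LH[OF r that] by auto
  then show False
    using not_weakly_complete_if_gauss_map_and_E21_E22_extend[OF r g holomorphic_on_const] gq wc
    by blast
qed

lemma weakly_complete_gauss_maps_same_limit: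
  assumes wc: "weakly_complete \<omega> \<theta>"
    and r0: "0 < r0" "r0 \<le> 1" and g: "g holomorphic_on ball 0 r0" "g 0 = a"
    and gq: "\<And>w. Re w < ln r0 \<Longrightarrow> E21 w \<noteq> 0 \<and> g (exp w) = E11 w / E21 w"
    and r1: "0 < r1" "r1 \<le> 1" and gs: "gs holomorphic_on ball 0 r1 - {0}" "not_essential gs 0"
    and gsq: "\<And>w. Re w < ln r1 \<Longrightarrow> E22 w \<noteq> 0 \<and> gs (exp w) = E12 w / E22 w"
  shows "(gs \<longlongrightarrow> a) (at 0)"
proof (rule ccontr)
  assume "\<not> (gs \<longlongrightarrow> a) (at 0)"
  moreover have "(g \<longlongrightarrow> a) (at 0)"
    using holomorphic_on_imp_continuous_on[OF g(1)] r0(1) g(2)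
    by (metis at_within_open centre_in_ball continuous_on_def open_ball)
  ultimately obtain c where c: "((\<lambda>z. inverse (gs z - g z)) \<longlongrightarrow> c) (at 0)"
    using tendsto_inverse_diff_if_not_essential[OF gs(2)] by blast
  define r where "r = min r0 r1"
  have r: "0 < r" "r \<le> 1" using r0 r1 by (auto simp: r_def)
  have "ln r \<le> ln r0" "ln r \<le> ln r1" using r0 r1 by (auto simp: r_def)
  then have gq': "\<And>w. Re w < ln r \<Longrightarrow> E21 w \<noteq> 0 \<and> g (exp w) = E11 w / E21 w"
    and gsq': "\<And>w. Re w < ln r \<Longrightarrow> E22 w \<noteq> 0 \<and> gs (exp w) = E12 w / E22 w"
    using gq gsq by auto
  have g': "g holomorphic_on ball 0 r" using g(1) by (rule holomorphic_on_subset) (auto simp: r_def)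
  have "gs holomorphic_on ball 0 r - {0}" using gs(1) by (rule holomorphic_on_subset) (auto simp: r_def)
  then obtain K where "K holomorphic_on ball 0 r" "\<And>w. Re w < ln r \<Longrightarrow> E21 w * E22 w = K (exp w)"
    using E21_E22_descends[OF r g' _ gq' gsq' c] by blast
  then show False
    using not_weakly_complete_if_gauss_map_and_E21_E22_extend[OF r g'] gq' wc by blast
qed

lemma weakly_complete_gauss_value_at_0_G_star:
  assumes wc: "weakly_complete \<omega> \<theta>"
    and G: "regular_gauss E11 E21" "gauss_value_at_0 E11 E21 a"
    and G_star: "regular_gauss E12 E22"
  shows "gauss_value_at_0 E12 E22 a"
proof -
  note hol = flat_front_holomorphic
  obtain r0 g where r0: "0 < r0" "r0 \<le> 1" and g: "g holomorphic_on ball 0 r0" "g 0 = a"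
      and gq: "\<And>w. Re w < ln r0 \<Longrightarrow> E21 w \<noteq> 0 \<and> g (exp w) = E11 w / E21 w"
    using gauss_value_near_end[OF hol(1,3) flat_front_no_common_zero(1) G] by metis
  have E22_ne: "\<exists>w\<in>LH. E22 w \<noteq> 0"
    using weakly_complete_E22_not_identically_zero[OF wc r0 g(1) gq] .
  obtain r1 gs where r1: "0 < r1" "r1 \<le> 1" and gs: "gs holomorphic_on ball 0 r1 - {0}" "not_essential gs 0"
      and gsq: "\<And>w. Re w < ln r1 \<Longrightarrow> E22 w \<noteq> 0 \<and> gs (exp w) = E12 w / E22 w"
    using regular_gauss_near_end[OF hol(2,4) flat_front_no_common_zero(2) E22_ne G_star] by metis
  have "(gs \<longlongrightarrow> a) (at 0)"
    using weakly_complete_gauss_maps_same_limit[OF wc r0 g gq r1 gs gsq] .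
  moreover have "eventually (\<lambda>w. gs (exp w) = E12 w / E22 w) end_filter"
    unfolding eventually_end_filter using gsq by (intro exI[of _ "ln r1"]) simp
  ultimately have "((\<lambda>w. E12 w / E22 w) \<longlongrightarrow> a) end_filter"
    by (simp add: tendsto_end_filter_exp_iff[symmetric] Lim_transform_eventually)
  then show ?thesis using E22_ne unfolding gauss_value_at_0_def by blast
qed

end

section \<open>The projection to the upper half-space model\<close>

lemma proj_uhs_fst_dist_le:
  assumes "u21 \<noteq> 0" "u22 \<noteq> 0"
  shows "dist (fst (proj_uhs u11 u12 u21 u22)) a \<le> dist (u11 / u21) a + dist (u12 / u22) a"
proof -
  define N where "N = cmod u21 ^ 2 + cmod u22 ^ 2"
  have "N > 0" using assms by (simp add: N_def add_pos_pos)
  \<comment> \<open>The first coordinate is the mean of u11/u21 and u12/u22 with weights |u21|^2, |u22|^2.\<close>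
  have eq: "u11 * cnj u21 + u12 * cnj u22 - a * complex_of_real N
      = (u11 / u21 - a) * complex_of_real (cmod u21 ^ 2) + (u12 / u22 - a) * complex_of_real (cmod u22 ^ 2)"
    using assms unfolding N_def of_real_add complex_norm_square by (simp add: field_simps)
  have "norm (u11 * cnj u21 + u12 * cnj u22 - a * complex_of_real N)
      \<le> norm ((u11 / u21 - a) * complex_of_real (cmod u21 ^ 2))
        + norm ((u12 / u22 - a) * complex_of_real (cmod u22 ^ 2))"
    unfolding eq by (rule norm_triangle_ineq)
  also have "\<dots> = dist (u11 / u21) a * cmod u21 ^ 2 + dist (u12 / u22) a * cmod u22 ^ 2"
    by (simp add: norm_mult norm_power dist_norm)
  also have "\<dots> \<le> (dist (u11 / u21) a + dist (u12 / u22) a) * N"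
    unfolding N_def by (simp add: algebra_simps add_mono mult_left_mono)
  finally have "norm (u11 * cnj u21 + u12 * cnj u22 - a * complex_of_real N) / N
      \<le> dist (u11 / u21) a + dist (u12 / u22) a"
    using \<open>N > 0\<close> by (simp add: divide_le_eq)
  moreover have "fst (proj_uhs u11 u12 u21 u22) - a
      = (u11 * cnj u21 + u12 * cnj u22 - a * complex_of_real N) / complex_of_real N"
    unfolding proj_uhs_def N_def[symmetric] fst_conv
    using \<open>N > 0\<close> by (simp add: diff_divide_distrib)
  ultimately show ?thesis
    using \<open>N > 0\<close> by (simp add: dist_norm norm_divide)
qed

lemma proj_uhs_snd_le:
  assumes "u21 \<noteq> 0" "u22 \<noteq> 0" "u11 * u22 - u12 * u21 = 1"
  shows "snd (proj_uhs u11 u12 u21 u22) \<le> dist (u11 / u21) a + dist (u12 / u22) a"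
proof -
  define N where "N = cmod u21 ^ 2 + cmod u22 ^ 2"
  have "N > 0" using assms by (simp add: N_def add_pos_pos)
  \<comment> \<open>det = 1 puts the two Gauss map values 1/|u21 u22| apart, and 2|u21 u22| \<le> N.\<close>
  have "u21 * u22 * (u11 / u21 - u12 / u22) = 1"
    using assms by (simp add: field_simps)
  then have "1 = cmod u21 * cmod u22 * dist (u11 / u21) (u12 / u22)"
    by (simp flip: norm_mult add: dist_norm)
  also have "\<dots> \<le> cmod u21 * cmod u22 * (dist (u11 / u21) a + dist (u12 / u22) a)"
    by (intro mult_left_mono dist_triangle2) auto
  also have "\<dots> \<le> N * (dist (u11 / u21) a + dist (u12 / u22) a)"
  proof (rule mult_right_mono)
    have "2 * cmod u21 * cmod u22 \<le> N"
      unfolding N_def by (rule sum_squares_bound)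
    moreover have "0 \<le> cmod u21 * cmod u22" by simp
    ultimately show "cmod u21 * cmod u22 \<le> N" by linarith
  qed simp
  finally show ?thesis
    using \<open>N > 0\<close> by (simp add: proj_uhs_def N_def[symmetric] divide_le_eq mult.commute)
qed

lemma tendsto_proj_uhs:
  assumes ev: "eventually (\<lambda>x. E21 x \<noteq> 0 \<and> E22 x \<noteq> 0 \<and> E11 x * E22 x - E12 x * E21 x = 1) F"
    and G: "((\<lambda>x. E11 x / E21 x) \<longlongrightarrow> a) F" and G_star: "((\<lambda>x. E12 x / E22 x) \<longlongrightarrow> a) F"
  shows "((\<lambda>x. proj_uhs (E11 x) (E12 x) (E21 x) (E22 x)) \<longlongrightarrow> (a, 0)) F"
proof -
  define P where "P = (\<lambda>x. proj_uhs (E11 x) (E12 x) (E21 x) (E22 x))"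
  define s where "s = (\<lambda>x. dist (E11 x / E21 x) a + dist (E12 x / E22 x) a)"
  have s: "(s \<longlongrightarrow> 0) F"
    unfolding s_def
    using tendsto_add[OF tendsto_dist_iff[THEN iffD1, OF G] tendsto_dist_iff[THEN iffD1, OF G_star]]
    by simp
  have "eventually (\<lambda>x. dist (fst (P x)) a \<le> s x) F"
    using ev by eventually_elim (simp add: P_def s_def proj_uhs_fst_dist_le)
  then have "((\<lambda>x. dist (fst (P x)) a) \<longlongrightarrow> 0) F"
    by (intro tendsto_sandwich[OF _ _ tendsto_const s]) auto
  then have "((\<lambda>x. fst (P x)) \<longlongrightarrow> a) F"
    by (rule tendsto_dist_iff[THEN iffD2])
  moreover have "eventually (\<lambda>x. snd (P x) \<le> s x) F"
    using ev by eventually_elim (simp add: P_def s_def proj_uhs_snd_le)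
  then have "((\<lambda>x. snd (P x)) \<longlongrightarrow> 0) F"
    by (intro tendsto_sandwich[OF _ _ tendsto_const s]) (auto simp: P_def proj_uhs_def)
  ultimately have "((\<lambda>x. (fst (P x), snd (P x))) \<longlongrightarrow> (a, 0)) F"
    by (rule tendsto_Pair)
  then show ?thesis by (simp add: P_def)
qed

theorem proposition1p11:
  fixes E11 E12 E21 E22 \<omega> \<theta> :: "complex \<Rightarrow> complex" and a :: complex
  assumes "flat_front_end E11 E12 E21 E22 \<omega> \<theta>"
    and "weakly_complete \<omega> \<theta>"
    and "regular_gauss E11 E21" and "regular_gauss E12 E22"
    and "gauss_value_at_0 E11 E21 a"
  shows "((\<lambda>w. proj_uhs (E11 w) (E12 w) (E21 w) (E22 w)) \<longlongrightarrow> (a, 0)) end_filter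
         \<and> gauss_value_at_0 E12 E22 a"
proof
  note ff = assms(1) and hol = flat_front_holomorphic[OF assms(1)]
  show G_star: "gauss_value_at_0 E12 E22 a"
    using weakly_complete_gauss_value_at_0_G_star[OF ff assms(2,3,5,4)] .
  have "eventually (\<lambda>w. E21 w \<noteq> 0) end_filter" "eventually (\<lambda>w. E22 w \<noteq> 0) end_filter"
    using eventually_den_nonzero_end_filter[OF hol(1,3) flat_front_no_common_zero(1)[OF ff] assms(3,5)]
      eventually_den_nonzero_end_filter[OF hol(2,4) flat_front_no_common_zero(2)[OF ff] assms(4) G_star]
    by blast+
  then have "eventually (\<lambda>w. E21 w \<noteq> 0 \<and> E22 w \<noteq> 0 \<and> E11 w * E22 w - E12 w * E21 w = 1) end_filter"
    using eventually_in_LH_end_filter by eventually_elim (use flat_front_det[OF ff] in blast)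
  then show "((\<lambda>w. proj_uhs (E11 w) (E12 w) (E21 w) (E22 w)) \<longlongrightarrow> (a, 0)) end_filter"
    using tendsto_proj_uhs assms(5) G_star unfolding gauss_value_at_0_def by blast
qed

end
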